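(* Let $H\in(0,1)$ and let $B^H=\{B^H(t):t\in[0,1]\}$ be a fractional Brownian motion with Hurst index $H$. Fix $\delta\in(0,H)$ and set $\ell_k=2^{-(H-\delta)k}$. For $\nu>0$ let $K(\nu)=\sup\{n\ge 1: 4\sqrt{n}>\nu\cdot 2^{\delta n}\}$. Then for any constants $\nu,\nu^*>0$, with $\rho=2(\nu+\nu^* )$, for all $k>K(\nu)$, $$\mathbb{P}\bigl(\|B^H_k-B^H_{k-1}\|_\infty\ge \rho\ell_k\bigr)=\mathbb{P}\Bigl(\max_{0\le j\le 2^{k-1}-1}|a^k_j-b^k_j|\ge \rho\ell_k\Bigr)\le 2\exp\bigl\{-(\nu^* )^2\cdot 2^{2k\delta-2}\bigr\}.$$
   Context: A fractional Brownian motion with Hurst index $H$ is a centered Gaussian process with $B^H(0)=0$ and covariance $\mathbb{E}[B^H(s)B^H(t)]=\tfrac12(|s|^{2H}+|t|^{2H}-|s-t|^{2H})$, taken with continuous sample paths. For $n\ge0$ let $t^n_i=i/2^n$, $i=0,\dots,2^n$, and $D_n=\{t^n_0,\dots,t^n_{2^n}\}$. $B^H_n$ denotes the continuous function on $[0,1]$ obtained by linear interpolation of the values $B^H(t^n_i)$, $i=0,\dots,2^n$ (the dyadic discretization of level $n$); $B^H_{-1}\equiv 0$. For $k\ge1$ and $j=0,\dots,2^{k-1}-1$: $a^k_j=B^H(t^k_{2j+1})$ and $b^k_j=\tfrac12\bigl(B^H(t^{k-1}_j)+B^H(t^{k-1}_{j+1})\bigr)$. $\|u\|_\infty=\sup_{t\in[0,1]}|u(t)|$.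 *)

theory Defs
  imports "HOL-Probability.Probability"
begin

definition fbm_cov :: "real \<Rightarrow> real \<Rightarrow> real \<Rightarrow> real" where
  "fbm_cov H s t = (\<bar>s\<bar> powr (2*H) + \<bar>t\<bar> powr (2*H) - \<bar>s - t\<bar> powr (2*H)) / 2"

definition centered_gaussian :: "'a measure \<Rightarrow> ('a \<Rightarrow> real) \<Rightarrow> real \<Rightarrow> bool" where
  "centered_gaussian M Y v \<longleftrightarrow>
     Y \<in> borel_measurable M \<and>
     ((v = 0 \<and> (AE x in M. Y x = 0)) \<or>
      (v > 0 \<and> distributed M lborel Y (normal_density 0 (sqrt v))))"

definition is_fbm :: "'a measure \<Rightarrow> real \<Rightarrow> (real \<Rightarrow> 'a \<Rightarrow> real) \<Rightarrow> bool" where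
  "is_fbm M H X \<longleftrightarrow>
     prob_space M \<and>
     (\<forall>t\<in>{0..1}. X t \<in> borel_measurable M) \<and>
     (\<forall>(n::nat) (t::nat \<Rightarrow> real) (c::nat \<Rightarrow> real). (\<forall>i<n. t i \<in> {0..1}) \<longrightarrow>
        centered_gaussian M (\<lambda>\<omega>. \<Sum>i<n. c i * X (t i) \<omega>)
          (\<Sum>i<n. \<Sum>j<n. c i * c j * fbm_cov H (t i) (t j))) \<and>
     (\<forall>\<omega>\<in>space M. X 0 \<omega> = 0) \<and>
     (\<forall>\<omega>\<in>space M. continuous_on {0..1} (\<lambda>t. X t \<omega>))"

text \<open>Dyadic discretization of level n: linear interpolation of the values at i/2^n.\<close>
definition dyadic_interp :: "(real \<Rightarrow> 'a \<Rightarrow> real) \<Rightarrow> nat \<Rightarrow> 'a \<Rightarrow> real \<Rightarrow> real" where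
  "dyadic_interp X n \<omega> t =
     (let s = t * 2 ^ n; i = min (nat \<lfloor>s\<rfloor>) (2 ^ n - 1)
      in X (real i / 2 ^ n) \<omega> + (s - real i) * (X (real (i + 1) / 2 ^ n) \<omega> - X (real i / 2 ^ n) \<omega>))"

definition sup_norm01 :: "(real \<Rightarrow> real) \<Rightarrow> real" where
  "sup_norm01 u = (SUP t\<in>{0..1}. \<bar>u t\<bar>)"

definition K_nu :: "real \<Rightarrow> real \<Rightarrow> nat" where
  "K_nu \<delta> \<nu> = Sup {n::nat. n \<ge> 1 \<and> 4 * sqrt (real n) > \<nu> * 2 powr (\<delta> * real n)}"

end

theory Submission
  imports Defs
begin

text \<open>The sup-norm of the difference of two consecutive dyadic interpolations is attained at the
  new midpoints, where it equals the detail coefficients a - b. Each detail coefficient is a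
  centered Gaussian with variance at most 2^(-2Hk), so a Chernoff bound and a union bound over the
  2^(k-1) midpoints give the tail estimate; for k > K(\<nu>) the factor 2^(k-1) is absorbed by the
  part \<nu> of the threshold.\<close>

section \<open>Tails of centered Gaussians\<close>

lemma normal_density_mult_exp:
  assumes "0 < \<sigma>"
  shows "normal_density 0 \<sigma> y * exp (a * y) = exp (a\<^sup>2 * \<sigma>\<^sup>2 / 2) * normal_density (a * \<sigma>\<^sup>2) \<sigma> y"
proof -
  have "-(y - 0)\<^sup>2 / (2 * \<sigma>\<^sup>2) + a * y = a\<^sup>2 * \<sigma>\<^sup>2 / 2 + (-(y - a * \<sigma>\<^sup>2)\<^sup>2 / (2 * \<sigma>\<^sup>2))"
    using assms by (simp add: field_simps power2_eq_square)
  then show ?thesis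
    unfolding normal_density_def by (simp add: exp_add[symmetric] mult_ac)
qed

lemma centered_gaussian_tail:
  assumes "prob_space M" and G: "centered_gaussian M Y v" and "v \<le> w" "0 < w" "0 < x"
  shows "measure M {\<omega>\<in>space M. x \<le> \<bar>Y \<omega>\<bar>} \<le> 2 * exp (- x\<^sup>2 / (2 * w))"
proof -
  interpret prob_space M by fact
  have [measurable]: "Y \<in> borel_measurable M"
    using G unfolding centered_gaussian_def by auto
  consider "AE \<omega> in M. Y \<omega> = 0" | "v > 0" "distributed M lborel Y (normal_density 0 (sqrt v))"
    using G unfolding centered_gaussian_def by auto
  then show ?thesis
  proof cases
    case 1
    then have "AE \<omega> in M. \<omega> \<notin> {\<omega>\<in>space M. x \<le> \<bar>Y \<omega>\<bar>}"
      by (rule AE_mp) (use \<open>0 < x\<close> in \<open>auto intro!: AE_I2\<close>)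
    then have "measure M {\<omega>\<in>space M. x \<le> \<bar>Y \<omega>\<bar>} = 0"
      by (subst prob_eq_0) auto
    then show ?thesis by simp
  next
    case 2
    define \<sigma> where "\<sigma> = sqrt v"
    have \<sigma>: "0 < \<sigma>" "\<sigma>\<^sup>2 = v" using 2 by (simp_all add: \<sigma>_def)
    have D: "distributed M lborel Y (normal_density 0 \<sigma>)" using 2 by (simp add: \<sigma>_def)
    text \<open>Chernoff bound with the even test function cosh(a y), optimised at a = x / v.\<close>
    define a where "a = x / v"
    define g where "g y = exp (a * y) + exp (- a * y)" for y
    have [measurable]: "g \<in> borel_measurable lborel" unfolding g_def by measurable
    have density_g: "normal_density 0 \<sigma> y * g y =
        exp (a\<^sup>2 * \<sigma>\<^sup>2 / 2) * normal_density (a * \<sigma>\<^sup>2) \<sigma> y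
      + exp ((-a)\<^sup>2 * \<sigma>\<^sup>2 / 2) * normal_density ((-a) * \<sigma>\<^sup>2) \<sigma> y" for y
      unfolding g_def distrib_left normal_density_mult_exp[OF \<sigma>(1), symmetric] by simp
    have "integrable lborel (\<lambda>y. normal_density 0 \<sigma> y * g y)"
      unfolding density_g
      by (intro Bochner_Integration.integrable_add integrable_mult_right integrable_normal_density)
        (use \<sigma> in auto)
    then have int_g: "integrable M (\<lambda>\<omega>. g (Y \<omega>))"
      using distributed_integrable[OF D] by simp
    have E_g: "(\<integral>\<omega>. g (Y \<omega>) \<partial>M) = 2 * exp (a\<^sup>2 * v / 2)"
      using distributed_integral[OF D, of g] unfolding density_g by (simp add: \<sigma>)
    have "measure M {\<omega>\<in>space M. x \<le> \<bar>Y \<omega>\<bar>} \<le> measure M {\<omega>\<in>space M. exp (a * x) \<le> g (Y \<omega>)}"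
    proof (rule finite_measure_mono)
      have "exp (a * x) \<le> g y" if "x \<le> \<bar>y\<bar>" for y
      proof -
        have "exp (a * x) \<le> exp (a * \<bar>y\<bar>)"
          using that 2 \<open>0 < x\<close> by (simp add: a_def divide_right_mono mult_left_mono)
        also have "\<dots> \<le> g y" unfolding g_def by (cases "y \<ge> 0") auto
        finally show ?thesis .
      qed
      then show "{\<omega>\<in>space M. x \<le> \<bar>Y \<omega>\<bar>} \<subseteq> {\<omega>\<in>space M. exp (a * x) \<le> g (Y \<omega>)}" by auto
    qed measurable
    also have "\<dots> \<le> (\<integral>\<omega>. g (Y \<omega>) \<partial>M) / exp (a * x)"
      by (rule integral_Markov_inequality_measure[OF int_g]) (auto simp: g_def)
    also have "\<dots> = 2 * exp (- x\<^sup>2 / (2 * v))"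
    proof -
      have "a\<^sup>2 * v / 2 - a * x = - x\<^sup>2 / (2 * v)"
        using 2 by (simp add: a_def field_simps power2_eq_square)
      then show ?thesis by (metis E_g exp_diff minus_divide_left times_divide_eq_right)
    qed
    also have "\<dots> \<le> 2 * exp (- x\<^sup>2 / (2 * w))"
      using 2 \<open>v \<le> w\<close> \<open>0 < x\<close> by (simp add: frac_le divide_simps)
    finally show ?thesis .
  qed
qed

section \<open>Consecutive dyadic interpolations\<close>

definition dyadic_index :: "nat \<Rightarrow> real \<Rightarrow> nat" where
  "dyadic_index n t = min (nat \<lfloor>t * 2 ^ n\<rfloor>) (2 ^ n - 1)"

text \<open>The paper's a^(n+1)_j - b^(n+1)_j.\<close>
definition dyadic_detail :: "(real \<Rightarrow> 'a \<Rightarrow> real) \<Rightarrow> nat \<Rightarrow> nat \<Rightarrow> 'a \<Rightarrow> real" where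
  "dyadic_detail X n j \<omega> =
     X (real (2 * j + 1) / 2 ^ Suc n) \<omega> - (X (real j / 2 ^ n) \<omega> + X (real (j + 1) / 2 ^ n) \<omega>) / 2"

lemma dyadic_interp_eq:
  "dyadic_interp X n \<omega> t = X (real (dyadic_index n t) / 2 ^ n) \<omega>
     + (t * 2 ^ n - real (dyadic_index n t))
       * (X (real (dyadic_index n t + 1) / 2 ^ n) \<omega> - X (real (dyadic_index n t) / 2 ^ n) \<omega>)"
  unfolding dyadic_interp_def dyadic_index_def Let_def ..

lemma dyadic_index_bounds:
  assumes "0 \<le> t" "t \<le> 1"
  shows "real (dyadic_index n t) \<le> t * 2 ^ n" "t * 2 ^ n \<le> real (dyadic_index n t) + 1"
    "dyadic_index n t < 2 ^ n"
proof -
  define s where "s = t * 2 ^ n"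
  have s: "0 \<le> s" "s \<le> 2 ^ n" using assms by (auto simp: s_def mult_le_cancel_right1)
  have "real (dyadic_index n t) \<le> s \<and> s \<le> real (dyadic_index n t) + 1"
  proof (cases "nat \<lfloor>s\<rfloor> \<le> 2 ^ n - 1")
    case True
    then have "real (dyadic_index n t) = of_int \<lfloor>s\<rfloor>" using s by (simp add: dyadic_index_def s_def)
    then show ?thesis by linarith
  next
    case False
    then have "2 ^ n \<le> nat \<lfloor>s\<rfloor>" by linarith
    then have "(2::int) ^ n \<le> \<lfloor>s\<rfloor>" using s le_nat_iff by fastforce
    then have "s = 2 ^ n" using s by (simp add: le_floor_iff)
    moreover have "real (dyadic_index n t) = 2 ^ n - 1"
      using False by (simp add: dyadic_index_def s_def of_nat_diff)
    ultimately show ?thesis by simp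
  qed
  then show "real (dyadic_index n t) \<le> t * 2 ^ n" "t * 2 ^ n \<le> real (dyadic_index n t) + 1"
    by (auto simp: s_def)
  show "dyadic_index n t < 2 ^ n"
  proof -
    have "(2::nat) ^ n - 1 < 2 ^ n" by simp
    then show ?thesis unfolding dyadic_index_def by linarith
  qed
qed

lemma nat_floor_half:
  assumes "0 \<le> (s::real)"
  shows "nat \<lfloor>s / 2\<rfloor> = nat \<lfloor>s\<rfloor> div 2"
proof -
  have "of_int (\<lfloor>s\<rfloor> div 2) \<le> s / 2" "s / 2 < of_int (\<lfloor>s\<rfloor> div 2) + 1"
    by linarith+
  then have "\<lfloor>s / 2\<rfloor> = \<lfloor>s\<rfloor> div 2" by (simp add: floor_eq_iff)
  then show ?thesis using assms by (simp add: nat_div_distrib)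
qed

lemma dyadic_index_Suc:
  assumes "0 \<le> t"
  shows "dyadic_index n t = dyadic_index (Suc n) t div 2"
proof -
  have floor: "nat \<lfloor>t * 2 ^ n\<rfloor> = nat \<lfloor>t * 2 ^ Suc n\<rfloor> div 2"
    using nat_floor_half[of "t * 2 ^ Suc n"] assms by simp
  have top: "((2::nat) ^ Suc n - 1) div 2 = 2 ^ n - 1" by (induct n) auto
  have min_div: "min (a div 2) (b div 2) = min a b div 2" for a b :: nat
    by (cases "a \<le> b") (auto simp: min_def div_le_mono)
  show ?thesis unfolding dyadic_index_def floor top[symmetric] min_div ..
qed

text \<open>Both interpolants are affine on each interval [i/2^(n+1), (i+1)/2^(n+1)] and agree at the
  coarse grid points, so their difference is a tent of height dyadic_detail X n (i div 2).\<close>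
lemma dyadic_interp_Suc_diff:
  assumes "0 \<le> t" "t \<le> 1"
  obtains m \<theta> where "m < 2 ^ n" "0 \<le> \<theta>" "\<theta> \<le> 1"
    "dyadic_interp X (Suc n) \<omega> t - dyadic_interp X n \<omega> t = \<theta> * dyadic_detail X n m \<omega>"
proof -
  define i where "i = dyadic_index (Suc n) t"
  define m where "m = i div 2"
  define r where "r = t * 2 ^ Suc n - real i"
  have r: "0 \<le> r" "r \<le> 1" using dyadic_index_bounds[OF assms, of "Suc n"] by (simp_all add: r_def i_def)
  have "i < 2 * 2 ^ n" using dyadic_index_bounds(3)[OF assms, of "Suc n"] by (simp add: i_def)
  then have m: "m < 2 ^ n" by (simp add: m_def less_mult_imp_div_less mult.commute)
  define A where "A = X (real m / 2 ^ n) \<omega>"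
  define B where "B = X (real (2 * m + 1) / 2 ^ Suc n) \<omega>"
  define C where "C = X (real (m + 1) / 2 ^ n) \<omega>"
  have coarse: "dyadic_interp X n \<omega> t = A + (t * 2 ^ n - real m) * (C - A)"
    unfolding dyadic_interp_eq dyadic_index_Suc[OF assms(1), of n] A_def C_def
    by (simp add: m_def i_def)
  have fine: "dyadic_interp X (Suc n) \<omega> t =
      X (real i / 2 ^ Suc n) \<omega> + r * (X (real (i + 1) / 2 ^ Suc n) \<omega> - X (real i / 2 ^ Suc n) \<omega>)"
    unfolding dyadic_interp_eq by (simp add: r_def i_def)
  have half: "t * 2 ^ n = (real i + r) / 2" by (simp add: r_def)
  have detail: "dyadic_detail X n m \<omega> = B - (A + C) / 2"
    by (simp add: dyadic_detail_def A_def B_def C_def)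
  consider "i = 2 * m" | "i = 2 * m + 1" unfolding m_def by linarith
  then show ?thesis
  proof cases
    case 1
    have "X (real i / 2 ^ Suc n) \<omega> = A" "X (real (i + 1) / 2 ^ Suc n) \<omega> = B"
      using 1 by (simp_all add: A_def B_def)
    then have "dyadic_interp X (Suc n) \<omega> t - dyadic_interp X n \<omega> t = r * dyadic_detail X n m \<omega>"
      unfolding fine coarse half detail 1 by (simp add: field_simps)
    with that m r show ?thesis by blast
  next
    case 2
    have "real (2 * m + 2) / 2 ^ Suc n = real (m + 1) / 2 ^ n" by (simp add: field_simps)
    then have "X (real i / 2 ^ Suc n) \<omega> = B" "X (real (i + 1) / 2 ^ Suc n) \<omega> = C"
      using 2 by (simp_all add: B_def C_def)
    then have "dyadic_interp X (Suc n) \<omega> t - dyadic_interp X n \<omega> t = (1 - r) * dyadic_detail X n m \<omega>"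
      unfolding fine coarse half detail 2 by (simp add: field_simps)
    from that[OF m _ _ this] r show ?thesis by simp
  qed
qed

lemma dyadic_interp_Suc_diff_midpoint:
  assumes "j < 2 ^ n"
  shows "dyadic_interp X (Suc n) \<omega> (real (2 * j + 1) / 2 ^ Suc n)
           - dyadic_interp X n \<omega> (real (2 * j + 1) / 2 ^ Suc n) = dyadic_detail X n j \<omega>"
proof -
  define t where "t = real (2 * j + 1) / 2 ^ Suc n"
  have "t * 2 ^ Suc n = real (2 * j + 1)" by (simp add: t_def)
  moreover have "2 * j + 1 \<le> 2 ^ Suc n - 1" using assms by simp
  ultimately have fine: "dyadic_index (Suc n) t = 2 * j + 1"
    unfolding dyadic_index_def by (simp only: floor_of_nat nat_int min_absorb1)
  have half: "t * 2 ^ n = real j + 1 / 2" by (simp add: t_def field_simps)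
  then have "\<lfloor>t * 2 ^ n\<rfloor> = int j" by (simp add: floor_eq_iff)
  then have coarse: "dyadic_index n t = j" using assms by (simp add: dyadic_index_def)
  have "dyadic_interp X (Suc n) \<omega> t = X t \<omega>"
    unfolding dyadic_interp_eq fine by (simp add: t_def)
  moreover have "dyadic_interp X n \<omega> t =
      X (real j / 2 ^ n) \<omega> + (X (real (j + 1) / 2 ^ n) \<omega> - X (real j / 2 ^ n) \<omega>) / 2"
    unfolding dyadic_interp_eq coarse half by simp
  ultimately show ?thesis
    unfolding t_def[symmetric] by (simp add: dyadic_detail_def t_def field_simps)
qed

lemma dyadic_points_in_unit_interval:
  assumes "j < 2 ^ n"
  shows "real (2 * j + 1) / 2 ^ Suc n \<in> {0..1}" "real j / 2 ^ n \<in> {0..1}"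
    "real (j + 1) / 2 ^ n \<in> {0..1}"
proof -
  have "2 * j + 1 \<le> (2::nat) ^ Suc n" "j \<le> (2::nat) ^ n" "j + 1 \<le> (2::nat) ^ n"
    using assms by simp_all
  then have "real (2 * j + 1) \<le> 2 ^ Suc n" "real j \<le> 2 ^ n" "real (j + 1) \<le> 2 ^ n"
    by (metis of_nat_le_iff of_nat_numeral of_nat_power)+
  then show "real (2 * j + 1) / 2 ^ Suc n \<in> {0..1}" "real j / 2 ^ n \<in> {0..1}"
    "real (j + 1) / 2 ^ n \<in> {0..1}"
    by simp_all
qed

lemma sup_norm01_dyadic_interp_Suc_diff:
  "sup_norm01 (\<lambda>t. dyadic_interp X (Suc n) \<omega> t - dyadic_interp X n \<omega> t)
     = (MAX j\<in>{0..<2 ^ n}. \<bar>dyadic_detail X n j \<omega>\<bar>)"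
proof -
  define D where "D t = \<bar>dyadic_interp X (Suc n) \<omega> t - dyadic_interp X n \<omega> t\<bar>" for t
  define Mx where "Mx = (MAX j\<in>{0..<(2::nat) ^ n}. \<bar>dyadic_detail X n j \<omega>\<bar>)"
  have detail_le: "\<bar>dyadic_detail X n j \<omega>\<bar> \<le> Mx" if "j < 2 ^ n" for j
    unfolding Mx_def using that by (intro Max_ge) auto
  have D_le: "D t \<le> Mx" if t: "t \<in> {0..1}" for t
  proof -
    obtain m \<theta> where m: "m < 2 ^ n" "0 \<le> \<theta>" "\<theta> \<le> 1"
      and diff: "dyadic_interp X (Suc n) \<omega> t - dyadic_interp X n \<omega> t = \<theta> * dyadic_detail X n m \<omega>"
      using dyadic_interp_Suc_diff[of t n X \<omega>] t by auto
    have "D t = \<theta> * \<bar>dyadic_detail X n m \<omega>\<bar>" unfolding D_def diff using m by (simp add: abs_mult)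
    also have "\<dots> \<le> \<bar>dyadic_detail X n m \<omega>\<bar>" using m by (simp add: mult_left_le_one_le)
    also have "\<dots> \<le> Mx" using detail_le m by simp
    finally show ?thesis .
  qed
  have "Mx \<in> (\<lambda>j. \<bar>dyadic_detail X n j \<omega>\<bar>) ` {0..<2 ^ n}"
    unfolding Mx_def by (intro Max_in) auto
  then obtain j where j: "j < 2 ^ n" "Mx = \<bar>dyadic_detail X n j \<omega>\<bar>" by auto
  from dyadic_points_in_unit_interval(1)[OF j(1)] have "Mx \<le> (SUP t\<in>{0..1}. D t)"
    unfolding j(2) D_def dyadic_interp_Suc_diff_midpoint[OF j(1), symmetric]
    by (rule cSUP_upper) (use D_le in \<open>auto intro!: bdd_aboveI2[where M = Mx] simp: D_def\<close>)
  moreover have "(SUP t\<in>{0..1}. D t) \<le> Mx" by (rule cSUP_least) (use D_le in auto)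
  ultimately show ?thesis unfolding sup_norm01_def D_def Mx_def by linarith
qed

section \<open>Detail coefficients of fractional Brownian motion\<close>

lemma fbm_dyadic_detail_gaussian:
  assumes fbm: "is_fbm M H X" and j: "j < 2 ^ n"
  obtains v where "centered_gaussian M (dyadic_detail X n j) v" "v \<le> (1 / 2 ^ Suc n) powr (2 * H)"
proof -
  define h :: real where "h = 1 / 2 ^ Suc n"
  define a where "a = real (2 * j + 1) / 2 ^ Suc n"
  define t where "t i = (if i = 0 then a else if i = 1 then a - h else a + h)" for i :: nat
  define c where "c i = (if i = 0 then 1 else - 1 / 2 :: real)" for i :: nat
  have h: "0 < h" by (simp add: h_def)
  have t: "t 0 = real (2 * j + 1) / 2 ^ Suc n" "t 1 = real j / 2 ^ n" "t 2 = real (j + 1) / 2 ^ n"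
    by (simp_all add: t_def a_def h_def field_simps)
  have sum3: "(\<Sum>i<3. f i) = f 0 + f 1 + f (2::nat)" for f :: "nat \<Rightarrow> real"
    by (simp add: numeral_3_eq_3 eval_nat_numeral)
  have "\<forall>i<3. t i \<in> {0..1}"
    using dyadic_points_in_unit_interval[OF j] t by (auto simp: less_Suc_eq eval_nat_numeral)
  then have G: "centered_gaussian M (\<lambda>\<omega>. \<Sum>i<3. c i * X (t i) \<omega>)
      (\<Sum>i<3. \<Sum>k<3. c i * c k * fbm_cov H (t i) (t k))"
    using fbm unfolding is_fbm_def by blast
  have "(\<lambda>\<omega>. \<Sum>i<3. c i * X (t i) \<omega>) = dyadic_detail X n j"
    unfolding sum3 t by (simp add: fun_eq_iff c_def dyadic_detail_def field_simps)
  moreover have "(\<Sum>i<3. \<Sum>k<3. c i * c k * fbm_cov H (t i) (t k))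
      = h powr (2 * H) - (2 * h) powr (2 * H) / 4"
    using h by (simp add: sum3 c_def t_def fbm_cov_def field_simps)
  ultimately show ?thesis
    using that G by (simp add: h_def)
qed

lemma fbm_dyadic_detail_tail:
  assumes fbm: "is_fbm M H X" and "j < 2 ^ n" "0 < x"
  shows "measure M {\<omega>\<in>space M. x \<le> \<bar>dyadic_detail X n j \<omega>\<bar>}
           \<le> 2 * exp (- x\<^sup>2 / (2 * (1 / 2 ^ Suc n) powr (2 * H)))"
proof -
  obtain v where "centered_gaussian M (dyadic_detail X n j) v" "v \<le> (1 / 2 ^ Suc n) powr (2 * H)"
    using fbm_dyadic_detail_gaussian[OF assms(1,2)] .
  moreover have "prob_space M" using fbm by (simp add: is_fbm_def)
  moreover have "0 < (1 / 2 ^ Suc n :: real) powr (2 * H)" by simp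
  ultimately show ?thesis
    using centered_gaussian_tail \<open>0 < x\<close> by blast
qed

lemma fbm_max_dyadic_detail_tail:
  assumes fbm: "is_fbm M H X" and "0 < x"
  shows "measure M {\<omega>\<in>space M. x \<le> (MAX j\<in>{0..<2 ^ n}. \<bar>dyadic_detail X n j \<omega>\<bar>)}
           \<le> 2 ^ n * (2 * exp (- x\<^sup>2 / (2 * (1 / 2 ^ Suc n) powr (2 * H))))"
proof -
  interpret prob_space M using fbm by (simp add: is_fbm_def)
  define A where "A j = {\<omega>\<in>space M. x \<le> \<bar>dyadic_detail X n j \<omega>\<bar>}" for j
  have "{\<omega>\<in>space M. x \<le> (MAX j\<in>{0..<2 ^ n}. \<bar>dyadic_detail X n j \<omega>\<bar>)} = (\<Union>j\<in>{0..<2 ^ n}. A j)"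
    unfolding A_def by (auto simp: Max_ge_iff)
  moreover have "A j \<in> sets M" if "j < 2 ^ n" for j
  proof -
    have "X t \<in> borel_measurable M" if "t \<in> {0..1}" for t
      using fbm that by (simp add: is_fbm_def)
    note [measurable] = this[OF dyadic_points_in_unit_interval(1)[OF \<open>j < 2 ^ n\<close>]]
      this[OF dyadic_points_in_unit_interval(2)[OF \<open>j < 2 ^ n\<close>]]
      this[OF dyadic_points_in_unit_interval(3)[OF \<open>j < 2 ^ n\<close>]]
    show ?thesis unfolding A_def dyadic_detail_def by measurable
  qed
  ultimately have "measure M {\<omega>\<in>space M. x \<le> (MAX j\<in>{0..<2 ^ n}. \<bar>dyadic_detail X n j \<omega>\<bar>)}
      \<le> (\<Sum>j\<in>{0..<2 ^ n}. measure M (A j))"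
    by (simp add: finite_measure_subadditive_finite image_subset_iff)
  also have "\<dots> \<le> (\<Sum>j\<in>{0..<(2::nat) ^ n}. 2 * exp (- x\<^sup>2 / (2 * (1 / 2 ^ Suc n) powr (2 * H))))"
    by (rule sum_mono) (use fbm_dyadic_detail_tail[OF fbm _ \<open>0 < x\<close>] in \<open>auto simp: A_def\<close>)
  finally show ?thesis by simp
qed

section \<open>The threshold K(\<nu>) and the final estimate\<close>

lemma bdd_above_K_nu_set:
  assumes "0 < \<delta>" "0 < \<nu>"
  shows "bdd_above {n::nat. n \<ge> 1 \<and> 4 * sqrt (real n) > \<nu> * 2 powr (\<delta> * real n)}"
proof -
  define c where "c = \<delta> * ln 2 / 2"
  have c: "0 < c" using assms by (simp add: c_def)
  text \<open>2^(\<delta> n) = exp(c n)^2 \<ge> (c n)^2 grows faster than 4 sqrt n.\<close>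
  have "n \<le> nat \<lceil>4 / (\<nu> * c\<^sup>2)\<rceil>" if n: "n \<ge> 1" "4 * sqrt (real n) > \<nu> * 2 powr (\<delta> * real n)" for n
  proof (rule ccontr)
    assume "\<not> ?thesis"
    then have "4 / (\<nu> * c\<^sup>2) \<le> real n" by linarith
    then have big: "4 \<le> \<nu> * c\<^sup>2 * real n" using assms c by (simp add: field_simps)
    have "2 powr (\<delta> * real n) = exp (c * real n) ^ 2"
      by (simp add: powr_def c_def exp_of_nat_mult[symmetric] power2_eq_square exp_add[symmetric]
          algebra_simps)
    also have "\<dots> \<ge> (c * real n)\<^sup>2"
      using c by (intro power_mono) (auto intro: order.trans[OF _ exp_ge_add_one_self])
    finally have "\<nu> * 2 powr (\<delta> * real n) \<ge> (\<nu> * c\<^sup>2 * real n) * real n"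
      using assms by (simp add: power2_eq_square mult_ac)
    moreover have "(\<nu> * c\<^sup>2 * real n) * real n \<ge> 4 * real n" using big by (intro mult_right_mono) auto
    moreover have "sqrt (real n) \<le> real n" using n(1) by (simp add: real_sqrt_le_iff' power2_eq_square)
    ultimately show False using n(2) by linarith
  qed
  then show ?thesis by (intro bdd_aboveI) blast
qed

lemma K_nu_less_imp:
  assumes "0 < \<delta>" "0 < \<nu>" "K_nu \<delta> \<nu> < k"
  shows "4 * sqrt (real k) \<le> \<nu> * 2 powr (\<delta> * real k)"
proof -
  let ?S = "{n. n \<ge> 1 \<and> 4 * sqrt (real n) > \<nu> * 2 powr (\<delta> * real n)}"
  have "k \<notin> ?S"
  proof
    assume "k \<in> ?S"
    then have "k \<le> Sup ?S" using bdd_above_K_nu_set[OF assms(1,2)] by (rule cSup_upper)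
    then show False using assms(3) by (simp add: K_nu_def)
  qed
  then show ?thesis using assms(3) by auto
qed

text \<open>Since (\<nu> + \<nu>s)^2 \<ge> \<nu>^2 + \<nu>s^2, the Gaussian exponent splits into a part
  2 \<nu>^2 2^(2k\<delta>) \<ge> k - 1 \<ge> ln 2^(k-1), which pays for the union bound, and a part
  \<ge> \<nu>s^2 2^(2k\<delta>-2).\<close>
lemma union_bound_exponent:
  fixes n :: nat and H \<delta> \<nu> \<nu>s x :: real
  assumes "0 < \<nu>" "0 < \<nu>s"
    and K: "4 * sqrt (real (Suc n)) \<le> \<nu> * 2 powr (\<delta> * real (Suc n))"
    and x: "x = 2 * (\<nu> + \<nu>s) * 2 powr (- (H - \<delta>) * real (Suc n))"
  shows "2 ^ n * (2 * exp (- x\<^sup>2 / (2 * (1 / 2 ^ Suc n) powr (2 * H))))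
           \<le> 2 * exp (- (\<nu>s ^ 2) * 2 powr (2 * real (Suc n) * \<delta> - 2))"
proof -
  define k where "k = real (Suc n)"
  define E where "E = 2 powr (2 * \<delta> * k)"
  have var: "(1 / 2 ^ Suc n) powr (2 * H) = 2 powr (- (2 * H * k))"
  proof -
    have "2 powr k = 2 ^ Suc n" unfolding k_def by (rule powr_realpow) simp
    then have "(1::real) / 2 ^ Suc n = 2 powr (- k)" by (simp add: powr_minus_divide)
    then show ?thesis by (simp add: powr_powr mult_ac)
  qed
  have x2: "x\<^sup>2 = 4 * (\<nu> + \<nu>s)\<^sup>2 * 2 powr (- (2 * (H - \<delta>) * k))"
    unfolding x k_def by (simp add: power2_eq_square powr_add[symmetric] algebra_simps)
  have "x\<^sup>2 / (2 * (1 / 2 ^ Suc n) powr (2 * H))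
      = 2 * (\<nu> + \<nu>s)\<^sup>2 * (2 powr (- (2 * (H - \<delta>) * k)) / 2 powr (- (2 * H * k)))"
    unfolding var x2 by simp
  also have "2 powr (- (2 * (H - \<delta>) * k)) / 2 powr (- (2 * H * k)) = E"
    unfolding E_def powr_diff[symmetric] by (simp add: algebra_simps)
  finally have exponent: "x\<^sup>2 / (2 * (1 / 2 ^ Suc n) powr (2 * H)) = 2 * (\<nu> + \<nu>s)\<^sup>2 * E" .
  have "(4 * sqrt k)\<^sup>2 \<le> (\<nu> * 2 powr (\<delta> * k))\<^sup>2"
    using K unfolding k_def by (intro power_mono) auto
  then have E16: "16 * k \<le> \<nu>\<^sup>2 * E"
    unfolding E_def by (simp add: k_def power2_eq_square powr_add[symmetric] algebra_simps)
  have "0 \<le> E" by (simp add: E_def)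
  moreover have "\<nu>\<^sup>2 + \<nu>s\<^sup>2 \<le> (\<nu> + \<nu>s)\<^sup>2" using assms(1,2) by (simp add: power2_eq_square algebra_simps)
  ultimately have "2 * (\<nu>\<^sup>2 * E) + 2 * (\<nu>s\<^sup>2 * E) \<le> 2 * (\<nu> + \<nu>s)\<^sup>2 * E"
    by (simp add: mult_right_mono flip: distrib_left distrib_right)
  moreover have "0 \<le> \<nu>s\<^sup>2 * E" using \<open>0 \<le> E\<close> by simp
  ultimately have ge: "real n + \<nu>s\<^sup>2 * E / 4 \<le> 2 * (\<nu> + \<nu>s)\<^sup>2 * E"
    using E16 by (simp add: k_def)
  have "(2::real) ^ n \<le> exp 1 ^ n"
    using exp_ge_add_one_self[of 1] by (intro power_mono) auto
  then have pow: "(2::real) ^ n \<le> exp (real n)" by (simp add: exp_of_nat_mult[symmetric])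
  have "2 ^ n * (2 * exp (- x\<^sup>2 / (2 * (1 / 2 ^ Suc n) powr (2 * H))))
      = 2 * (2 ^ n * exp (- (2 * (\<nu> + \<nu>s)\<^sup>2 * E)))"
    using exponent by simp
  also have "\<dots> \<le> 2 * (exp (real n) * exp (- (real n + \<nu>s\<^sup>2 * E / 4)))"
    using ge pow by (intro mult_left_mono mult_mono) auto
  also have "\<dots> = 2 * exp (- (\<nu>s ^ 2) * 2 powr (2 * real (Suc n) * \<delta> - 2))"
    by (simp add: exp_add[symmetric] E_def k_def powr_diff mult_ac)
  finally show ?thesis .
qed

theorem theorem1:
  fixes M :: "'a measure" and X :: "real \<Rightarrow> 'a \<Rightarrow> real"
    and H \<delta> \<nu> \<nu>s :: real and k :: nat
  assumes H: "0 < H" "H < 1"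
    and fbm: "is_fbm M H X"
    and \<delta>: "0 < \<delta>" "\<delta> < H"
    and \<nu>: "\<nu> > 0" "\<nu>s > 0"
    and k: "k > K_nu \<delta> \<nu>"
  defines "lk \<equiv> 2 powr (-(H - \<delta>) * real k)"
    and "\<rho> \<equiv> 2 * (\<nu> + \<nu>s)"
  shows "measure M {\<omega> \<in> space M.
            sup_norm01 (\<lambda>t. dyadic_interp X k \<omega> t - dyadic_interp X (k - 1) \<omega> t) \<ge> \<rho> * lk}
         = measure M {\<omega> \<in> space M.
            (MAX j\<in>{0..<2 ^ (k - 1)}.
               \<bar>X (real (2 * j + 1) / 2 ^ k) \<omega>
                 - (X (real j / 2 ^ (k - 1)) \<omega> + X (real (j + 1) / 2 ^ (k - 1)) \<omega>) / 2\<bar>) \<ge> \<rho> * lk}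
       \<and> measure M {\<omega> \<in> space M.
            (MAX j\<in>{0..<2 ^ (k - 1)}.
               \<bar>X (real (2 * j + 1) / 2 ^ k) \<omega>
                 - (X (real j / 2 ^ (k - 1)) \<omega> + X (real (j + 1) / 2 ^ (k - 1)) \<omega>) / 2\<bar>) \<ge> \<rho> * lk}
         \<le> 2 * exp (-(\<nu>s ^ 2) * 2 powr (2 * real k * \<delta> - 2))"
proof -
  obtain n where n: "k = Suc n" using k by (cases k) auto
  have "4 * sqrt (real (Suc n)) \<le> \<nu> * 2 powr (\<delta> * real (Suc n))"
    using K_nu_less_imp[OF \<delta>(1) \<nu>(1) k] n by simp
  from union_bound_exponent[OF \<nu> this, of "\<rho> * lk" H]
  have tail: "measure M {\<omega> \<in> space M. \<rho> * lk \<le> (MAX j\<in>{0..<2 ^ n}. \<bar>dyadic_detail X n j \<omega>\<bar>)}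
      \<le> 2 * exp (- (\<nu>s ^ 2) * 2 powr (2 * real (Suc n) * \<delta> - 2))"
    using fbm_max_dyadic_detail_tail[OF fbm, of "\<rho> * lk" n] \<nu>
    by (simp add: \<rho>_def lk_def n)
  show ?thesis
    using tail unfolding n diff_Suc_1 sup_norm01_dyadic_interp_Suc_diff
    by (simp add: dyadic_detail_def)
qed

end
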